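(* Let $(\boldsymbol{P},\boldsymbol{\lambda})$ be a feasible train routing of a TMO instance in which every path $P_i$ has no repeated vertices. For any two distinct trains $y,z$ such that $Q_y$ and $Q_z$ share an arc, either $Q_y\subseteq Q_z$ or $Q_z\subseteq Q_y$. Moreover, if $y$ is a leader and $Q_y$ and $Q_z$ share an arc, then $Q_z\subseteq Q_y$.
   Context: An instance of TMO is $(D,\tau,d,\Delta)$ with $D=(V,A)$ a directed graph with source $s$ and sink $t$, $\tau:A\to\mathbb{Z}_{\ge0}$, $d\in\mathbb{Z}_{\ge1}$ trains and headway $\Delta\in\mathbb{Z}_{\ge1}$. A train routing $(\boldsymbol{P},\boldsymbol{\lambda})$ consists, for each train $i\in[d]$, of an $s$-$t$-path $P_i$ and an entry function $\lambda_i:P_i\to\mathbb{Z}_{\ge0}$; it is feasible if $\lambda_i(a)+\tau_a\le\lambda_i(a')$ for consecutive arcs $a,a'$ on $P_i$, and $|\lambda_i(a)-\lambda_{i'}(a)|\ge\Delta$ for $i\ne i'$ and $a\in P_i\cap P_{i'}$. For an arc $a$ let $S_a$ be the set of trains using $a$; for $x,y\in S_a$ write $x\prec_a y$ if $\lambda_x(a)<\lambda_y(a)$. For a train $x$ and arc $a\in P_x$, let $\bar S^x_a$ be the tuple, ordered by $\prec_a$, of all trains $y\in S_a$ with $\lambda_y(a)\le\lambda_x(a)$ (including $x$). Let $\ell_x$ be the last arc of $P_x$ (it enters $t$). The transition arc $a^{tr}_x$ is the last arc $a$ on $P_x$ with $\bar S^x_a\ne\bar S^x_{\ell_x}$, and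 $a^{tr}_x=\bot$ if no such arc exists. $Q_x$ is the subpath of $P_x$ from the head of $a^{tr}_x$ to $t$ (so $a^{tr}_x\notin Q_x$); if $a^{tr}_x=\bot$, $Q_x=P_x$. Paths are regarded as arc sets for $\subseteq$. A train $x$ is a leader if it is the first train (w.r.t. $\prec_{\ell_x}$) on its last arc $\ell_x$. *)

theory Defs
  imports Main
begin

(* Arcs of the directed graph D = (V, A) are pairs (tail, head). *)
type_synonym 'v arc = "'v \<times> 'v"

definition tmo_instance ::
  "'v set \<Rightarrow> 'v arc set \<Rightarrow> 'v \<Rightarrow> 'v \<Rightarrow> ('v arc \<Rightarrow> nat) \<Rightarrow> nat \<Rightarrow> nat \<Rightarrow> bool" where
  "tmo_instance V A s t \<tau> d \<Delta> \<longleftrightarrow>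
     A \<subseteq> V \<times> V \<and> s \<in> V \<and> t \<in> V \<and> s \<noteq> t \<and> d \<ge> 1 \<and> \<Delta> \<ge> 1"

definition st_path :: "'v arc set \<Rightarrow> 'v \<Rightarrow> 'v \<Rightarrow> 'v arc list \<Rightarrow> bool" where
  "st_path A s t P \<longleftrightarrow>
     P \<noteq> [] \<and> set P \<subseteq> A \<and> fst (hd P) = s \<and> snd (last P) = t \<and>
     (\<forall>j. Suc j < length P \<longrightarrow> snd (P ! j) = fst (P ! Suc j))"

definition path_vertices :: "'v arc list \<Rightarrow> 'v list" where
  "path_vertices P = map fst P @ [snd (last P)]"

definition vertex_simple :: "'v arc list \<Rightarrow> bool" where
  "vertex_simple P \<longleftrightarrow> distinct (path_vertices P)"

(* Feasible train routing: trains are 1..d, P i is the path of train i,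
   lam i a is the entry time lambda_i(a) of train i into arc a (only relevant for a on P i). *)
definition feasible_routing ::
  "'v set \<Rightarrow> 'v arc set \<Rightarrow> 'v \<Rightarrow> 'v \<Rightarrow> ('v arc \<Rightarrow> nat) \<Rightarrow> nat \<Rightarrow> nat \<Rightarrow>
   (nat \<Rightarrow> 'v arc list) \<Rightarrow> (nat \<Rightarrow> 'v arc \<Rightarrow> nat) \<Rightarrow> bool" where
  "feasible_routing V A s t \<tau> d \<Delta> P lam \<longleftrightarrow>
     (\<forall>i\<in>{1..d}. st_path A s t (P i)) \<and>
     (\<forall>i\<in>{1..d}. \<forall>j. Suc j < length (P i) \<longrightarrow>
         lam i (P i ! j) + \<tau> (P i ! j) \<le> lam i (P i ! Suc j)) \<and>
     (\<forall>i\<in>{1..d}. \<forall>i'\<in>{1..d}. \<forall>a. i \<noteq> i' \<longrightarrow> a \<in> set (P i) \<longrightarrow> a \<in> set (P i') \<longrightarrow>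
         \<bar>int (lam i a) - int (lam i' a)\<bar> \<ge> int \<Delta>)"

definition trains_on :: "nat \<Rightarrow> (nat \<Rightarrow> 'v arc list) \<Rightarrow> 'v arc \<Rightarrow> nat set" where
  "trains_on d P a = {i \<in> {1..d}. a \<in> set (P i)}"

definition Sbar :: "nat \<Rightarrow> (nat \<Rightarrow> 'v arc list) \<Rightarrow> (nat \<Rightarrow> 'v arc \<Rightarrow> nat) \<Rightarrow> nat \<Rightarrow> 'v arc \<Rightarrow> nat list" where
  "Sbar d P lam x a =
     sorted_key_list_of_set (\<lambda>y. lam y a) {y \<in> trains_on d P a. lam y a \<le> lam x a}"

definition last_arc :: "(nat \<Rightarrow> 'v arc list) \<Rightarrow> nat \<Rightarrow> 'v arc" where
  "last_arc P x = last (P x)"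

(* Position (index in P x) of the transition arc, None for bottom. *)
definition transition_idx :: "nat \<Rightarrow> (nat \<Rightarrow> 'v arc list) \<Rightarrow> (nat \<Rightarrow> 'v arc \<Rightarrow> nat) \<Rightarrow> nat \<Rightarrow> nat option" where
  "transition_idx d P lam x =
     (let J = {j. j < length (P x) \<and> Sbar d P lam x (P x ! j) \<noteq> Sbar d P lam x (last_arc P x)}
      in if J = {} then None else Some (Max J))"

definition Qpath :: "nat \<Rightarrow> (nat \<Rightarrow> 'v arc list) \<Rightarrow> (nat \<Rightarrow> 'v arc \<Rightarrow> nat) \<Rightarrow> nat \<Rightarrow> 'v arc set" where
  "Qpath d P lam x =
     (case transition_idx d P lam x of
        None \<Rightarrow> set (P x)
      | Some j \<Rightarrow> set (drop (Suc j) (P x)))"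

definition leader :: "nat \<Rightarrow> (nat \<Rightarrow> 'v arc list) \<Rightarrow> (nat \<Rightarrow> 'v arc \<Rightarrow> nat) \<Rightarrow> nat \<Rightarrow> bool" where
  "leader d P lam x \<longleftrightarrow>
     (\<forall>y\<in>trains_on d P (last_arc P x). y \<noteq> x \<longrightarrow> lam x (last_arc P x) < lam y (last_arc P x))"

end

theory Submission
  imports Defs
begin

(* Let a be a common arc of Q_y and Q_z on which z enters before y. Then z occurs in the tuple
   bar S^y_a, and this tuple is the same on every arc of Q_y. Since bar S^z_b is the prefix of
   bar S^y_b ending at z, also bar S^z is constant on Q_y; in particular z uses every arc of Q_y,
   among them the last arc of y. As P_z has no repeated vertex and both paths end in t, the part
   of P_z from any arc of Q_y onwards stays inside Q_y, so bar S^z is constant on it and it lies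
   in Q_z. Hence Q_y \<subseteq> Q_z, and y is no leader because z precedes it on its last arc. *)

lemma in_set_drop_conv_nth:
  "x \<in> set (drop k xs) \<longleftrightarrow> (\<exists>j. k \<le> j \<and> j < length xs \<and> x = xs ! j)"
proof
  assume "x \<in> set (drop k xs)"
  then obtain m where "m < length xs - k" "x = xs ! (k + m)" by (auto simp: in_set_conv_nth)
  then show "\<exists>j. k \<le> j \<and> j < length xs \<and> x = xs ! j" by (intro exI[of _ "k + m"]) auto
next
  assume "\<exists>j. k \<le> j \<and> j < length xs \<and> x = xs ! j"
  then obtain j where "k \<le> j" "j < length xs" "x = xs ! j" by blast
  then have "x = drop k xs ! (j - k)" "j - k < length (drop k xs)" by auto
  then show "x \<in> set (drop k xs)" by (metis nth_mem)
qed

context linorder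
begin

lemma set_sorted_key_list_of_set_if_inj_on:
  assumes "inj_on f A" "finite A"
  shows "set (sorted_key_list_of_set f A) = A"
proof -
  interpret folding_insort_key "(\<le>)" "(<)" A f by unfold_locales (rule assms(1))
  show ?thesis using assms(2) by simp
qed

lemma sorted_key_list_of_set_filter:
  assumes "inj_on f A" "finite A"
  shows "sorted_key_list_of_set f {w \<in> A. Q w} = filter Q (sorted_key_list_of_set f A)"
proof -
  interpret folding_insort_key "(\<le>)" "(<)" A f by unfold_locales (rule assms(1))
  let ?L = "sorted_key_list_of_set f A"
  have "sorted_key_list_of_set f (set (filter Q ?L)) = filter Q ?L"
    using assms(2) by (intro idem_if_sorted_distinct) (auto simp: sorted_filter distinct_if_distinct_map)
  then show ?thesis using set_sorted_key_list_of_set[OF subset_refl assms(2)] by simp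
qed

lemma filter_le_key_eq_takeWhile:
  assumes "sorted_wrt (<) (map f L)" "z \<in> set L"
  shows "filter (\<lambda>w. f w \<le> f z) L = takeWhile (\<lambda>w. w \<noteq> z) L @ [z]"
proof -
  obtain xs ys where L: "L = xs @ z # ys" using split_list[OF assms(2)] by blast
  have "\<forall>x\<in>set xs. f x < f z" "\<forall>y\<in>set ys. f z < f y" "z \<notin> set xs"
    using assms(1) by (auto simp: L sorted_wrt_append)
  then have "filter (\<lambda>w. f w \<le> f z) L = xs @ [z]"
    by (auto simp: L filter_empty_conv not_le intro!: filter_True less_imp_le)
  moreover have "takeWhile (\<lambda>w. w \<noteq> z) L = xs"
    unfolding L using \<open>z \<notin> set xs\<close> by (subst takeWhile_append2) auto
  ultimately show ?thesis by simp
qed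

lemma sorted_key_list_of_set_le_key:
  assumes "inj_on f A" "finite A" "z \<in> A"
  shows "sorted_key_list_of_set f {w \<in> A. f w \<le> f z}
           = takeWhile (\<lambda>w. w \<noteq> z) (sorted_key_list_of_set f A) @ [z]"
proof -
  interpret folding_insort_key "(\<le>)" "(<)" A f by unfold_locales (rule assms(1))
  show ?thesis
    using assms(2,3) by (simp add: sorted_key_list_of_set_filter[OF assms(1,2)] filter_le_key_eq_takeWhile)
qed

end

lemma Suc_less_length_if_nth_ne_last:
  assumes "xs ! j \<noteq> last xs" "j < length xs"
  shows "Suc j < length xs"
proof (rule ccontr)
  assume "\<not> Suc j < length xs"
  then have "j = length xs - 1" using assms(2) by linarith
  moreover have "xs \<noteq> []" using assms(2) by auto
  ultimately show False using assms(1) by (simp add: last_conv_nth)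
qed

lemma vertex_simple_tails_distinct: "vertex_simple R \<Longrightarrow> distinct (map fst R)"
  by (simp add: vertex_simple_def path_vertices_def)

lemma vertex_simple_head_ne_target:
  assumes "st_path A s t R" "vertex_simple R" "Suc i < length R"
  shows "snd (R ! i) \<noteq> t"
proof
  assume "snd (R ! i) = t"
  then have "fst (R ! Suc i) = snd (last R)" using assms(1,3) by (simp add: st_path_def)
  moreover have "fst (R ! Suc i) \<in> fst ` set R" using assms(3) by simp
  ultimately show False using assms(2) by (simp add: vertex_simple_def path_vertices_def)
qed

lemma suffix_subset_of_simple_path:
  assumes P: "st_path A s t P" and R: "st_path A' s' t R" "vertex_simple R"
    and sub: "set (drop k P) \<subseteq> set R" and i: "i < length R" "R ! i \<in> set (drop k P)"
  shows "set (drop i R) \<subseteq> set (drop k P)"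
proof -
  have "R ! m \<in> set (drop k P)" if "i \<le> m" "m < length R" for m
    using that
  proof (induction m rule: dec_induct)
    case base
    show ?case using i(2) .
  next
    case (step n)
    then obtain j where j: "k \<le> j" "j < length P" "R ! n = P ! j"
      by (auto simp: in_set_drop_conv_nth)
    have "snd (P ! j) \<noteq> t" using vertex_simple_head_ne_target[OF R step.prems] j(3) by simp
    then have "P ! j \<noteq> last P" using P by (auto simp: st_path_def)
    then have j_not_last: "Suc j < length P" using j(2) by (rule Suc_less_length_if_nth_ne_last)
    have next_in: "P ! Suc j \<in> set (drop k P)"
      unfolding in_set_drop_conv_nth using j(1) j_not_last by (intro exI[of _ "Suc j"]) simp
    then have "P ! Suc j \<in> set R" using sub by blast
    then obtain q where q: "q < length R" "R ! q = P ! Suc j" by (metis in_set_conv_nth)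
    have "snd (P ! j) = fst (P ! Suc j)" using P j_not_last by (simp add: st_path_def)
    moreover have "snd (R ! n) = fst (R ! Suc n)" using R(1) step.prems by (simp add: st_path_def)
    ultimately have "fst (R ! q) = fst (R ! Suc n)" using j(3) q(2) by simp
    then have "q = Suc n"
      using nth_eq_iff_index_eq[OF vertex_simple_tails_distinct[OF R(2)]] q(1) step.prems by simp
    then show ?case using next_in q(2) by simp
  qed
  then show ?thesis by (auto simp: in_set_drop_conv_nth)
qed

definition Qpath_start :: "nat \<Rightarrow> (nat \<Rightarrow> 'v arc list) \<Rightarrow> (nat \<Rightarrow> 'v arc \<Rightarrow> nat) \<Rightarrow> nat \<Rightarrow> nat" where
  "Qpath_start d P lam x = (case transition_idx d P lam x of None \<Rightarrow> 0 | Some j \<Rightarrow> Suc j)"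

lemma Qpath_eq_set_drop: "Qpath d P lam x = set (drop (Qpath_start d P lam x) (P x))"
  by (simp add: Qpath_def Qpath_start_def split: option.split)

lemma Qpath_subset_path: "Qpath d P lam x \<subseteq> set (P x)"
  by (simp add: Qpath_eq_set_drop set_drop_subset)

lemma Sbar_eq_last_arc_if_in_Qpath:
  assumes "b \<in> Qpath d P lam x"
  shows "Sbar d P lam x b = Sbar d P lam x (last_arc P x)"
proof -
  define J where "J = {j. j < length (P x) \<and> Sbar d P lam x (P x ! j) \<noteq> Sbar d P lam x (last_arc P x)}"
  have start: "Qpath_start d P lam x = (if J = {} then 0 else Suc (Max J))"
    by (simp add: Qpath_start_def transition_idx_def J_def Let_def)
  obtain i where i: "Qpath_start d P lam x \<le> i" "i < length (P x)" "b = P x ! i"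
    using assms by (auto simp: Qpath_eq_set_drop in_set_drop_conv_nth)
  have "i \<notin> J"
  proof (cases "J = {}")
    case False
    then have "Max J < i" using i(1) start by simp
    moreover have "finite J" by (simp add: J_def)
    ultimately show ?thesis using Max_ge[of J i] by linarith
  qed simp
  then show ?thesis using i(2,3) by (simp add: J_def)
qed

lemma set_drop_subset_Qpath:
  assumes "\<forall>i. m \<le> i \<longrightarrow> i < length (P x) \<longrightarrow> Sbar d P lam x (P x ! i) = Sbar d P lam x (last_arc P x)"
  shows "set (drop m (P x)) \<subseteq> Qpath d P lam x"
proof -
  define J where "J = {j. j < length (P x) \<and> Sbar d P lam x (P x ! j) \<noteq> Sbar d P lam x (last_arc P x)}"
  have start: "Qpath_start d P lam x = (if J = {} then 0 else Suc (Max J))"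
    by (simp add: Qpath_start_def transition_idx_def J_def Let_def)
  have "Qpath_start d P lam x \<le> m"
  proof (cases "J = {}")
    case False
    moreover have "finite J" by (simp add: J_def)
    ultimately have "Max J \<in> J" by simp
    then have "Max J < m" using assms by (auto simp: J_def not_le)
    then show ?thesis using False start by simp
  qed (simp add: start)
  then show ?thesis by (simp add: Qpath_eq_set_drop set_drop_subset_set_drop)
qed

lemma last_arc_in_Qpath:
  assumes "P x \<noteq> []"
  shows "last_arc P x \<in> Qpath d P lam x"
proof -
  have "set (drop (length (P x) - 1) (P x)) \<subseteq> Qpath d P lam x"
  proof (intro set_drop_subset_Qpath allI impI)
    fix i assume "length (P x) - 1 \<le> i" "i < length (P x)"
    then have "i = length (P x) - 1" by linarith
    then show "Sbar d P lam x (P x ! i) = Sbar d P lam x (last_arc P x)"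
      by (simp add: last_arc_def last_conv_nth[OF assms])
  qed
  moreover have "last_arc P x \<in> set (drop (length (P x) - 1) (P x))"
    using assms by (auto simp: last_arc_def last_conv_nth in_set_drop_conv_nth)
  ultimately show ?thesis by blast
qed

locale simple_feasible_routing =
  fixes V :: "'v set" and A :: "'v arc set" and s t :: 'v
    and \<tau> :: "'v arc \<Rightarrow> nat" and d \<Delta> :: nat
    and P :: "nat \<Rightarrow> 'v arc list" and lam :: "nat \<Rightarrow> 'v arc \<Rightarrow> nat"
  assumes tmo: "tmo_instance V A s t \<tau> d \<Delta>"
    and feasible: "feasible_routing V A s t \<tau> d \<Delta> P lam"
    and simple: "\<forall>i\<in>{1..d}. vertex_simple (P i)"
begin

abbreviation "Q \<equiv> Qpath d P lam"
abbreviation "Sb \<equiv> Sbar d P lam"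

lemma path_of_train: "x \<in> {1..d} \<Longrightarrow> st_path A s t (P x)"
  using feasible by (simp add: feasible_routing_def)

lemma entry_times_distinct:
  assumes "i \<in> {1..d}" "i' \<in> {1..d}" "i \<noteq> i'" "a \<in> set (P i)" "a \<in> set (P i')"
  shows "lam i a \<noteq> lam i' a"
proof -
  have "\<bar>int (lam i a) - int (lam i' a)\<bar> \<ge> int \<Delta>"
    using feasible assms unfolding feasible_routing_def by blast
  moreover have "\<Delta> \<ge> 1" using tmo by (simp add: tmo_instance_def)
  ultimately show ?thesis by auto
qed

lemma inj_on_entry_time: "inj_on (\<lambda>w. lam w a) (trains_on d P a)"
proof (rule inj_onI)
  fix u w assume "u \<in> trains_on d P a" "w \<in> trains_on d P a" "lam u a = lam w a"
  then show "u = w" using entry_times_distinct[of u w a] by (auto simp: trains_on_def)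
qed

lemma set_Sbar: "set (Sb y a) = {w \<in> trains_on d P a. lam w a \<le> lam y a}"
  unfolding Sbar_def
  by (rule set_sorted_key_list_of_set_if_inj_on)
    (auto intro: inj_on_subset[OF inj_on_entry_time] simp: trains_on_def)

lemma Sbar_eq_takeWhile_of_member:
  assumes "z \<in> set (Sb y a)"
  shows "Sb z a = takeWhile (\<lambda>w. w \<noteq> z) (Sb y a) @ [z]"
proof -
  let ?T = "set (Sb y a)"
  have "{w \<in> trains_on d P a. lam w a \<le> lam z a} = {w \<in> ?T. lam w a \<le> lam z a}"
    using assms by (auto simp: set_Sbar)
  then have "Sb z a = sorted_key_list_of_set (\<lambda>w. lam w a) {w \<in> ?T. lam w a \<le> lam z a}"
    by (simp add: Sbar_def)
  also have "\<dots> = takeWhile (\<lambda>w. w \<noteq> z) (sorted_key_list_of_set (\<lambda>w. lam w a) ?T) @ [z]"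
    using assms
    by (intro sorted_key_list_of_set_le_key)
      (auto intro: inj_on_subset[OF inj_on_entry_time] simp: set_Sbar trains_on_def)
  also have "sorted_key_list_of_set (\<lambda>w. lam w a) ?T = Sb y a"
    unfolding set_Sbar by (simp add: Sbar_def)
  finally show ?thesis .
qed

lemma Sbar_eq_of_member:
  assumes "Sb y b = Sb y c" "z \<in> set (Sb y b)"
  shows "Sb z b = Sb z c"
  using Sbar_eq_takeWhile_of_member[OF assms(2)] Sbar_eq_takeWhile_of_member[of z y c] assms by simp

lemma Qpath_subset_if_Sbar_constant:
  assumes y: "y \<in> {1..d}" and z: "z \<in> {1..d}" and on_P_z: "Q y \<subseteq> set (P z)"
    and Sb_const: "\<And>b. b \<in> Q y \<Longrightarrow> Sb z b = S"
  shows "Q y \<subseteq> Q z"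
proof
  fix b assume "b \<in> Q y"
  then have "b \<in> set (P z)" using on_P_z by blast
  then obtain i where i: "i < length (P z)" "P z ! i = b" by (metis in_set_conv_nth)
  have tail: "set (drop i (P z)) \<subseteq> Q y"
    using suffix_subset_of_simple_path[OF path_of_train[OF y] path_of_train[OF z]]
      simple z on_P_z i \<open>b \<in> Q y\<close> by (simp add: Qpath_eq_set_drop)
  have "last (P z) \<in> set (drop i (P z))"
    using i(1) by (metis drop_eq_Nil last_drop last_in_set not_le)
  then have "last (P z) \<in> Q y" using tail by blast
  then have "Sb z (last_arc P z) = S" using Sb_const by (simp add: last_arc_def)
  have "set (drop i (P z)) \<subseteq> Q z"
  proof (intro set_drop_subset_Qpath allI impI)
    fix m assume "i \<le> m" "m < length (P z)"
    then have "P z ! m \<in> set (drop i (P z))" by (auto simp: in_set_drop_conv_nth)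
    then have "P z ! m \<in> Q y" using tail by blast
    then show "Sb z (P z ! m) = Sb z (last_arc P z)"
      using Sb_const \<open>Sb z (last_arc P z) = S\<close> by simp
  qed
  moreover have "b \<in> set (drop i (P z))"
    unfolding in_set_drop_conv_nth using i by (intro exI[of _ i]) simp
  ultimately show "b \<in> Q z" by blast
qed

lemma Qpath_subset_if_earlier:
  assumes y: "y \<in> {1..d}" and z: "z \<in> {1..d}" and a: "a \<in> Q y" "a \<in> Q z"
    and earlier: "lam z a < lam y a"
  shows "Q y \<subseteq> Q z" and "z \<in> set (Sb y (last_arc P y))"
proof -
  have "z \<in> set (Sb y a)"
    using a(2) earlier Qpath_subset_path z by (fastforce simp: set_Sbar trains_on_def)
  moreover have "Sb y b = Sb y a" if "b \<in> Q y" for b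
    using Sbar_eq_last_arc_if_in_Qpath that a(1) by metis
  ultimately have z_before_y: "z \<in> set (Sb y b)" and "Sb z b = Sb z a" if "b \<in> Q y" for b
    using that Sbar_eq_of_member[of y b a z] by simp_all
  have "P y \<noteq> []" using path_of_train[OF y] by (simp add: st_path_def)
  then show "z \<in> set (Sb y (last_arc P y))" using z_before_y last_arc_in_Qpath by blast
  have "Q y \<subseteq> set (P z)" using z_before_y by (auto simp: set_Sbar trains_on_def)
  then show "Q y \<subseteq> Q z"
    using Qpath_subset_if_Sbar_constant y z \<open>\<And>b. b \<in> Q y \<Longrightarrow> Sb z b = Sb z a\<close> by blast
qed

end

theorem mainTheorem4:
  fixes V :: "'v set" and A :: "'v arc set" and s t :: 'v
    and \<tau> :: "'v arc \<Rightarrow> nat" and d \<Delta> :: nat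
    and P :: "nat \<Rightarrow> 'v arc list" and lam :: "nat \<Rightarrow> 'v arc \<Rightarrow> nat"
    and y z :: nat
  assumes "tmo_instance V A s t \<tau> d \<Delta>"
    and "feasible_routing V A s t \<tau> d \<Delta> P lam"
    and "\<forall>i\<in>{1..d}. vertex_simple (P i)"
    and "y \<in> {1..d}" and "z \<in> {1..d}" and "y \<noteq> z"
    and "Qpath d P lam y \<inter> Qpath d P lam z \<noteq> {}"
  shows "(Qpath d P lam y \<subseteq> Qpath d P lam z \<or> Qpath d P lam z \<subseteq> Qpath d P lam y)
         \<and> (leader d P lam y \<longrightarrow> Qpath d P lam z \<subseteq> Qpath d P lam y)"
proof -
  interpret simple_feasible_routing V A s t \<tau> d \<Delta> P lam
    using assms(1-3) by unfold_locales
  obtain a where a: "a \<in> Q y" "a \<in> Q z" using assms(7) by blast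
  have "lam y a \<noteq> lam z a"
    using entry_times_distinct assms(4-6) a Qpath_subset_path by blast
  then consider "lam z a < lam y a" | "lam y a < lam z a" by linarith
  then show ?thesis
  proof cases
    case 1
    then have "Q y \<subseteq> Q z" "z \<in> set (Sb y (last_arc P y))"
      using Qpath_subset_if_earlier assms(4,5) a by blast+
    then have "\<not> leader d P lam y" using assms(6) by (auto simp: leader_def set_Sbar)
    then show ?thesis using \<open>Q y \<subseteq> Q z\<close> by blast
  next
    case 2
    then show ?thesis using Qpath_subset_if_earlier(1)[OF assms(5,4) a(2,1)] by blast
  qed
qed

end
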